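(* For every $d\ge1$ and all nonnegative integers $k_1,\dots,k_d$, \[ \lim_{n\to\infty}\mathbb E\Bigl(\prod_{i=1}^d \bigl(X[n,i]\bigr)_{k_i}\Bigr)=1 . \]
   Context: Uniform random recursive tree: start at step $0$ with the tree $T_0$ consisting of the single vertex $0$ (the root). At step $n\ge1$, a vertex is chosen uniformly at random among the existing vertices $0,1,\dots,n-1$, independently of the past, and a new vertex $n$ is added and joined by an edge to the chosen vertex; $T_n$ is the resulting tree on vertices $0,\dots,n$. $\deg_n(i)$ is the degree of vertex $i$ in $T_n$, $L_n(1)$ is the set of neighbours of the root $0$ in $T_n$, and $X[n,d]=|\{i\in L_n(1):\deg_n(i)=d\}|$. For real $a$ and integer $k\ge0$, the falling factorial is $(a)_0=1$ and $(a)_k=a(a-1)\cdots(a-k+1)$ for $k\ge1$. *)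

theory Defs
  imports "HOL-Probability.Probability"
begin

text \<open>A tree T_n on vertices 0..n is encoded by its
parent function par: for 1 <= j <= n, par j is the vertex to which j was attached
(par j < j). Values outside 1..n are irrelevant (set to 0).\<close>

fun rrt :: "nat \<Rightarrow> (nat \<Rightarrow> nat) pmf" where
  "rrt 0 = return_pmf (\<lambda>_. 0)"
| "rrt (Suc n) = do { p \<leftarrow> rrt n; c \<leftarrow> pmf_of_set {..n}; return_pmf (p(Suc n := c)) }"

definition deg :: "(nat \<Rightarrow> nat) \<Rightarrow> nat \<Rightarrow> nat \<Rightarrow> nat" where
  "deg par n i = card {j \<in> {1..n}. par j = i} + (if 1 \<le> i \<and> i \<le> n then 1 else 0)"

definition rootnbrs :: "(nat \<Rightarrow> nat) \<Rightarrow> nat \<Rightarrow> nat set" where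
  "rootnbrs par n = {j \<in> {1..n}. par j = 0}"

definition Xcnt :: "(nat \<Rightarrow> nat) \<Rightarrow> nat \<Rightarrow> nat \<Rightarrow> nat" where
  "Xcnt par n d = card {i \<in> rootnbrs par n. deg par n i = d}"

definition ffall :: "real \<Rightarrow> nat \<Rightarrow> real" where
  "ffall a k = (\<Prod>j<k. (a - real j))"

end

theory Submission
  imports Defs
begin

(* Write x_i = X[n,i] and, for a multi-index k, M_k(n) = E (prod_{i=1..D} (x_i)_{k_i}).
   Given T_n, vertex n+1 attaches to a uniform c in {0..n}: if c = 0, x_1 grows by one;
   if c is a root neighbour of degree e, one vertex moves from class e to class e+1;
   otherwise nothing changes.  The identities (a+1)_m = (a)_m + m (a)_{m-1} and
   a (a-1)_m = (a)_m (a-m) turn the average over c into the exact recursion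
     M_k(n+1) = M_k(n) + (k_1 M_{k-e_1}(n) - |k| M_k(n) + sum_e k_{e+1} M_{k+e_e-e_{e+1}}(n)) / (n+1),
   where every moment on the right other than M_k has smaller weight sum_i i k_i.
   Thus, by induction on the weight, a_n = M_k(n) - 1 satisfies
   a_{n+1} = (1 - |k|/(n+1)) a_n + eps_n/(n+1) with eps_n -> 0, and an elementary lemma on
   such recursions yields a_n -> 0. *)


section \<open>The tree process\<close>

lemma finite_set_pmf_rrt: "finite (set_pmf (rrt n))"
  by (induction n) auto

lemma rrt_parent_less: "p \<in> set_pmf (rrt n) \<Longrightarrow> \<forall>j\<in>{1..n}. p j < j"
proof (induction n arbitrary: p)
  case 0 then show ?case by auto
next
  case (Suc n)
  then obtain q c where q: "q \<in> set_pmf (rrt n)" "c \<le> n" "p = q(Suc n := c)" by auto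
  show ?case using Suc.IH[OF q(1)] q(2,3) by (auto simp: le_Suc_eq)
qed

lemma integrable_rrt: "integrable (measure_pmf (rrt n)) (f :: _ \<Rightarrow> real)"
  by (rule integrable_measure_pmf_finite[OF finite_set_pmf_rrt])

lemma expectation_rrt_Suc:
  "measure_pmf.expectation (rrt (Suc n)) (g :: _ \<Rightarrow> real) =
   measure_pmf.expectation (rrt n) (\<lambda>p. (\<Sum>c\<le>n. g (p(Suc n := c))) / real (Suc n))"
proof -
  have "measure_pmf.expectation (rrt (Suc n)) g = (\<Sum>p\<in>set_pmf (rrt n). pmf (rrt n) p *\<^sub>R
     measure_pmf.expectation (pmf_of_set {..n} \<bind> (\<lambda>c. return_pmf (p(Suc n := c)))) g)"
    by (simp only: rrt.simps, rule pmf_expectation_bind) (auto simp: finite_set_pmf_rrt)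
  also have "\<dots> = (\<Sum>p\<in>set_pmf (rrt n). pmf (rrt n) p * ((\<Sum>c\<le>n. g (p(Suc n := c))) / real (Suc n)))"
    by (intro sum.cong refl, subst pmf_expectation_bind_pmf_of_set)
      (auto simp: sum_divide_distrib field_simps)
  also have "\<dots> = measure_pmf.expectation (rrt n) (\<lambda>p. (\<Sum>c\<le>n. g (p(Suc n := c))) / real (Suc n))"
    by (subst integral_measure_pmf[of "set_pmf (rrt n)"]) (auto simp: finite_set_pmf_rrt)
  finally show ?thesis .
qed


section \<open>Attaching one vertex\<close>

definition counts :: "(nat \<Rightarrow> nat) \<Rightarrow> nat \<Rightarrow> nat \<Rightarrow> real" where
  "counts p n i = real (Xcnt p n i)"

lemma rootnbrs_subset: "rootnbrs p n \<subseteq> {1..n}"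
  by (auto simp: rootnbrs_def)

lemma finite_degree_class: "finite {j \<in> rootnbrs p n. deg p n j = i}"
  by (rule finite_subset[OF _ finite_atLeastAtMost[of 1 n]]) (use rootnbrs_subset in auto)

lemma deg_attach_old:
  "i \<le> n \<Longrightarrow> deg (p(Suc n := c)) (Suc n) i = deg p n i + (if c = i then 1 else 0)"
proof -
  assume i: "i \<le> n"
  have "{j \<in> {1..Suc n}. (p(Suc n := c)) j = i} =
        {j \<in> {1..n}. p j = i} \<union> (if c = i then {Suc n} else {})"
    by (auto simp: le_Suc_eq)
  then show ?thesis using i by (auto simp: deg_def)
qed

lemma deg_attach_new:
  assumes "\<forall>j\<in>{1..n}. p j < j" "c \<le> n"
  shows "deg (p(Suc n := c)) (Suc n) (Suc n) = 1"
proof -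
  have "{j \<in> {1..Suc n}. (p(Suc n := c)) j = Suc n} = {}"
    using assms by (auto simp: le_Suc_eq) (metis atLeastAtMost_iff le_refl less_Suc_eq not_less order_less_trans)
  then show ?thesis by (auto simp: deg_def)
qed

lemma rootnbrs_attach:
  "rootnbrs (p(Suc n := c)) (Suc n) = rootnbrs p n \<union> (if c = 0 then {Suc n} else {})"
  by (auto simp: rootnbrs_def le_Suc_eq)

lemma counts_attach_root:
  assumes "\<forall>j\<in>{1..n}. p j < j"
  shows "counts (p(Suc n := 0)) (Suc n) = (counts p n)(1 := counts p n 1 + 1)"
proof
  fix i
  have new: "Suc n \<notin> rootnbrs p n" using rootnbrs_subset[of p n] by auto
  have old: "deg (p(Suc n := 0)) (Suc n) j = deg p n j" if "j \<in> rootnbrs p n" for j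
    using that rootnbrs_subset[of p n] by (subst deg_attach_old) auto
  have "{j \<in> rootnbrs (p(Suc n := 0)) (Suc n). deg (p(Suc n := 0)) (Suc n) j = i}
     = {j \<in> rootnbrs p n. deg p n j = i} \<union> (if i = 1 then {Suc n} else {})"
    using new old deg_attach_new[OF assms, of 0] by (auto simp: rootnbrs_attach)
  then show "counts (p(Suc n := 0)) (Suc n) i = ((counts p n)(1 := counts p n 1 + 1)) i"
    using new finite_degree_class[of p n i] by (auto simp: counts_def Xcnt_def)
qed

lemma counts_attach_other:
  assumes "c \<noteq> 0" "c \<notin> rootnbrs p n"
  shows "counts (p(Suc n := c)) (Suc n) = counts p n"
proof
  fix i
  have "deg (p(Suc n := c)) (Suc n) j = deg p n j" if "j \<in> rootnbrs p n" for j
    using that assms rootnbrs_subset[of p n] by (subst deg_attach_old) auto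
  then have "{j \<in> rootnbrs (p(Suc n := c)) (Suc n). deg (p(Suc n := c)) (Suc n) j = i}
     = {j \<in> rootnbrs p n. deg p n j = i}"
    using assms by (auto simp: rootnbrs_attach)
  then show "counts (p(Suc n := c)) (Suc n) i = counts p n i"
    by (simp add: counts_def Xcnt_def)
qed

definition move_up :: "(nat \<Rightarrow> real) \<Rightarrow> nat \<Rightarrow> nat \<Rightarrow> real" where
  "move_up x e = (\<lambda>i. x i - (if e = i then 1 else 0) + (if Suc e = i then 1 else 0))"

lemma counts_attach_rootnbr:
  assumes c: "c \<in> rootnbrs p n"
  shows "counts (p(Suc n := c)) (Suc n) = move_up (counts p n) (deg p n c)"
proof
  fix i
  let ?A = "{j \<in> rootnbrs p n. deg p n j = i}"
  have fin: "finite ?A" by (rule finite_degree_class)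
  have "c \<noteq> 0" "c \<le> n" using c rootnbrs_subset[of p n] by auto
  then have "deg (p(Suc n := c)) (Suc n) j = deg p n j + (if c = j then 1 else 0)"
    if "j \<in> rootnbrs p n" for j
    using that rootnbrs_subset[of p n] by (subst deg_attach_old) auto
  then have new_class: "{j \<in> rootnbrs (p(Suc n := c)) (Suc n). deg (p(Suc n := c)) (Suc n) j = i}
     = (?A - {c}) \<union> (if Suc (deg p n c) = i then {c} else {})"
    using c \<open>c \<noteq> 0\<close> by (auto simp: rootnbrs_attach)
  show "counts (p(Suc n := c)) (Suc n) i = move_up (counts p n) (deg p n c) i"
  proof (cases "deg p n c = i")
    case True
    then have "c \<in> ?A" using c by simp
    then have "card (?A - {c}) = card ?A - 1" "card ?A \<ge> 1"
      using fin by (simp add: card_Diff_singleton, metis One_nat_def Suc_leI card_gt_0_iff empty_iff)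
    then show ?thesis
      using True new_class by (simp add: counts_def Xcnt_def move_up_def of_nat_diff)
  next
    case False
    then have "c \<notin> ?A" by simp
    then show ?thesis
      using False new_class fin by (simp add: counts_def Xcnt_def move_up_def)
  qed
qed

lemma sum_rootnbrs_by_degree:
  fixes h :: "nat \<Rightarrow> real"
  assumes h: "\<And>e. D < e \<Longrightarrow> h e = 0"
  shows "(\<Sum>c\<in>rootnbrs p n. h (deg p n c)) = (\<Sum>e\<in>{1..D}. counts p n e * h e)"
proof -
  have fin: "finite (rootnbrs p n)" using rootnbrs_subset finite_subset by blast
  have "(\<Sum>c\<in>rootnbrs p n. h (deg p n c)) =
        (\<Sum>c\<in>rootnbrs p n. \<Sum>e\<in>{1..D}. if deg p n c = e then h e else 0)"
  proof (rule sum.cong[OF refl])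
    fix c assume "c \<in> rootnbrs p n"
    then have "deg p n c \<ge> 1" using rootnbrs_subset[of p n] by (auto simp: deg_def)
    then show "h (deg p n c) = (\<Sum>e\<in>{1..D}. if deg p n c = e then h e else 0)"
      using h[of "deg p n c"] by (cases "deg p n c \<le> D") auto
  qed
  also have "\<dots> = (\<Sum>e\<in>{1..D}. \<Sum>c\<in>rootnbrs p n. if deg p n c = e then h e else 0)"
    by (rule sum.swap)
  also have "\<dots> = (\<Sum>e\<in>{1..D}. counts p n e * h e)"
    using fin by (simp add: sum.If_cases counts_def Xcnt_def Int_def conj_commute)
  finally show ?thesis .
qed


section \<open>Falling factorials and the moment product\<close>

lemma ffall_Suc: "ffall a (Suc m) = ffall a m * (a - real m)"
  by (simp add: ffall_def)

lemma ffall_Suc_plus_one: "ffall (a + 1) (Suc m) = (a + 1) * ffall a m"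
  unfolding ffall_def by (subst prod.lessThan_Suc_shift) (simp add: algebra_simps)

lemma ffall_plus_one: "ffall (a + 1) m = ffall a m + real m * ffall a (m - 1)"
proof (cases m)
  case 0 then show ?thesis by (simp add: ffall_def)
next
  case (Suc m')
  then show ?thesis
    unfolding Suc ffall_Suc_plus_one unfolding ffall_Suc diff_Suc_1 by (simp add: algebra_simps)
qed

lemma ffall_minus_one: "a * ffall (a - 1) m = ffall a m * (a - real m)"
  using ffall_Suc_plus_one[of "a - 1" m] ffall_Suc[of a m] by simp

definition moment_prod :: "nat \<Rightarrow> (nat \<Rightarrow> real) \<Rightarrow> (nat \<Rightarrow> nat) \<Rightarrow> real" where
  "moment_prod D x k = (\<Prod>i\<in>{1..D}. ffall (x i) (k i))"

definition lower_first :: "(nat \<Rightarrow> nat) \<Rightarrow> nat \<Rightarrow> nat" where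
  "lower_first k = k(1 := k 1 - 1)"

definition shift :: "nat \<Rightarrow> (nat \<Rightarrow> nat) \<Rightarrow> nat \<Rightarrow> nat" where
  "shift e k = k(e := Suc (k e), Suc e := k (Suc e) - 1)"

definition shift_weight :: "nat \<Rightarrow> (nat \<Rightarrow> nat) \<Rightarrow> nat \<Rightarrow> real" where
  "shift_weight D k e = (if Suc e \<le> D then real (k (Suc e)) else 0)"

lemma prod_remove_two:
  assumes "finite A" "e \<in> A" "Suc e \<in> A"
  shows "prod f A = f e * f (Suc e) * prod f (A - {e, Suc e})"
proof -
  have "prod f A = f e * prod f (A - {e})" using assms by (simp add: prod.remove)
  also have "prod f (A - {e}) = f (Suc e) * prod f (A - {e} - {Suc e})"
    using assms by (intro prod.remove) auto
  finally show ?thesis by (simp add: insert_commute set_diff_eq algebra_simps)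
qed

lemma moment_prod_root_step:
  assumes D: "D \<ge> 1"
  shows "moment_prod D (x(1 := x 1 + 1)) k - moment_prod D x k =
         real (k 1) * moment_prod D x (lower_first k)"
proof -
  let ?R = "\<lambda>y kk. \<Prod>i\<in>{1..D} - {1}. ffall (y i) (kk i)"
  have split: "moment_prod D y kk = ffall (y 1) (kk 1) * ?R y kk" for y kk
    unfolding moment_prod_def using D by (intro prod.remove) auto
  have "?R (x(1 := x 1 + 1)) k = ?R x k" "?R x (lower_first k) = ?R x k"
    by (auto intro!: prod.cong simp: lower_first_def)
  moreover have "ffall (x 1 + 1) (k 1) = ffall (x 1) (k 1) + real (k 1) * ffall (x 1) (k 1 - 1)"
    by (rule ffall_plus_one)
  ultimately show ?thesis
    unfolding split by (simp add: lower_first_def algebra_simps)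
qed

lemma moment_prod_move_step:
  assumes e: "e \<in> {1..D}"
  shows "x e * (moment_prod D (move_up x e) k - moment_prod D x k) =
         - real (k e) * moment_prod D x k + shift_weight D k e * moment_prod D x (shift e k)"
proof (cases "Suc e \<le> D")
  case True
  let ?R = "\<lambda>y kk. \<Prod>i\<in>{1..D} - {e, Suc e}. ffall (y i) (kk i)"
  have split: "moment_prod D y kk = ffall (y e) (kk e) * ffall (y (Suc e)) (kk (Suc e)) * ?R y kk" for y kk
    unfolding moment_prod_def using e True by (intro prod_remove_two) auto
  have rest: "?R (move_up x e) k = ?R x k" "?R x (shift e k) = ?R x k"
    by (auto intro!: prod.cong simp: move_up_def shift_def)
  have key: "a * (ffall (a - 1) ka * ffall (b + 1) kb - ffall a ka * ffall b kb) =
     - real ka * (ffall a ka * ffall b kb) + real kb * (ffall a (Suc ka) * ffall b (kb - 1))"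
    for a b :: real and ka kb
  proof -
    have "a * (ffall (a - 1) ka * ffall (b + 1) kb - ffall a ka * ffall b kb) =
          (a * ffall (a - 1) ka) * ffall (b + 1) kb - a * (ffall a ka * ffall b kb)"
      by (simp add: algebra_simps)
    also have "\<dots> = (ffall a ka * (a - ka)) * (ffall b kb + kb * ffall b (kb - 1)) - a * (ffall a ka * ffall b kb)"
      by (simp only: ffall_minus_one ffall_plus_one)
    also have "\<dots> = - real ka * (ffall a ka * ffall b kb) + real kb * (ffall a (Suc ka) * ffall b (kb - 1))"
      by (simp add: ffall_Suc algebra_simps)
    finally show ?thesis .
  qed
  have moved: "move_up x e e = x e - 1" "move_up x e (Suc e) = x (Suc e) + 1"
    by (auto simp: move_up_def)
  show ?thesis
    using True key[of "x e" "k e" "x (Suc e)" "k (Suc e)", THEN arg_cong[where f="\<lambda>t. t * ?R x k"]]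
    unfolding split rest moved by (simp add: shift_weight_def shift_def algebra_simps)
next
  case False
  let ?R = "\<lambda>y kk. \<Prod>i\<in>{1..D} - {e}. ffall (y i) (kk i)"
  have split: "moment_prod D y kk = ffall (y e) (kk e) * ?R y kk" for y kk
    unfolding moment_prod_def using e by (intro prod.remove) auto
  have rest: "?R (move_up x e) k = ?R x k"
    using False by (auto intro!: prod.cong simp: move_up_def)
  have key: "a * (ffall (a - 1) ka - ffall a ka) = - real ka * ffall a ka" for a :: real and ka
    using ffall_minus_one[of a ka] by (simp add: algebra_simps)
  have moved: "move_up x e e = x e - 1" by (simp add: move_up_def)
  show ?thesis
    using False key[of "x e" "k e", THEN arg_cong[where f="\<lambda>t. t * ?R x k"]]
    unfolding split rest moved by (simp add: shift_weight_def algebra_simps)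
qed


section \<open>The moment recursion\<close>

lemma average_attach_moment_prod:
  assumes sp: "\<forall>j\<in>{1..n}. p j < j" and D: "D \<ge> 1"
  defines "x \<equiv> counts p n"
  shows "(\<Sum>c\<le>n. moment_prod D (counts (p(Suc n := c)) (Suc n)) k) / real (Suc n)
    = moment_prod D x k + (real (k 1) * moment_prod D x (lower_first k)
        - real (\<Sum>e\<in>{1..D}. k e) * moment_prod D x k
        + (\<Sum>e\<in>{1..D}. shift_weight D k e * moment_prod D x (shift e k))) / real (Suc n)"
proof -
  let ?R = "rootnbrs p n"
  define g where "g c = moment_prod D (counts (p(Suc n := c)) (Suc n)) k - moment_prod D x k" for c
  let ?h = "\<lambda>e. moment_prod D (move_up x e) k - moment_prod D x k"
  have "(\<Sum>c\<le>n. g c) = g 0 + (\<Sum>c\<in>{1..n}. g c)"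
    by (simp add: atMost_atLeast0 sum.atLeast_Suc_atMost)
  also have "(\<Sum>c\<in>{1..n}. g c) = (\<Sum>c\<in>?R. g c)"
    using rootnbrs_subset counts_attach_other by (intro sum.mono_neutral_right) (auto simp: g_def x_def)
  also have "\<dots> = (\<Sum>c\<in>?R. ?h (deg p n c))"
    by (rule sum.cong) (auto simp: g_def x_def counts_attach_rootnbr)
  also have "\<dots> = (\<Sum>e\<in>{1..D}. x e * ?h e)"
    unfolding x_def
    by (rule sum_rootnbrs_by_degree) (auto simp: moment_prod_def move_up_def intro!: prod.cong)
  also have "\<dots> = (\<Sum>e\<in>{1..D}. - real (k e) * moment_prod D x k
                              + shift_weight D k e * moment_prod D x (shift e k))"
    by (rule sum.cong[OF refl]) (rule moment_prod_move_step)
  also have "\<dots> = - real (\<Sum>e\<in>{1..D}. k e) * moment_prod D x k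
                    + (\<Sum>e\<in>{1..D}. shift_weight D k e * moment_prod D x (shift e k))"
    by (simp add: sum_subtractf sum_distrib_right)
  also have "g 0 = real (k 1) * moment_prod D x (lower_first k)"
    using moment_prod_root_step[OF D] by (simp add: g_def x_def counts_attach_root[OF sp])
  finally have "(\<Sum>c\<le>n. g c) = real (k 1) * moment_prod D x (lower_first k)
        + (- real (\<Sum>e\<in>{1..D}. k e) * moment_prod D x k
        + (\<Sum>e\<in>{1..D}. shift_weight D k e * moment_prod D x (shift e k)))" .
  moreover have "(\<Sum>c\<le>n. moment_prod D (counts (p(Suc n := c)) (Suc n)) k)
                 = real (Suc n) * moment_prod D x k + (\<Sum>c\<le>n. g c)"
    by (simp add: g_def sum_subtractf)
  ultimately show ?thesis by (simp add: field_simps)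
qed

definition factorial_moment :: "nat \<Rightarrow> (nat \<Rightarrow> nat) \<Rightarrow> nat \<Rightarrow> real" where
  "factorial_moment D k n = measure_pmf.expectation (rrt n) (\<lambda>p. moment_prod D (counts p n) k)"

lemma factorial_moment_recursion:
  assumes D: "D \<ge> 1"
  shows "factorial_moment D k (Suc n) = factorial_moment D k n +
     (real (k 1) * factorial_moment D (lower_first k) n
      - real (\<Sum>e\<in>{1..D}. k e) * factorial_moment D k n
      + (\<Sum>e\<in>{1..D}. shift_weight D k e * factorial_moment D (shift e k) n)) / real (Suc n)"
proof -
  let ?M = "\<lambda>k p. moment_prod D (counts p n) k"
  have "factorial_moment D k (Suc n) = measure_pmf.expectation (rrt n) (\<lambda>p. ?M k p +
     (real (k 1) * ?M (lower_first k) p - real (\<Sum>e\<in>{1..D}. k e) * ?M k p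
      + (\<Sum>e\<in>{1..D}. shift_weight D k e * ?M (shift e k) p)) / real (Suc n))"
    unfolding factorial_moment_def expectation_rrt_Suc
  proof (rule integral_cong_AE)
    show "AE p in measure_pmf (rrt n).
            (\<Sum>c\<le>n. moment_prod D (counts (p(Suc n := c)) (Suc n)) k) / real (Suc n) =
            ?M k p + (real (k 1) * ?M (lower_first k) p - real (\<Sum>e\<in>{1..D}. k e) * ?M k p
              + (\<Sum>e\<in>{1..D}. shift_weight D k e * ?M (shift e k) p)) / real (Suc n)"
      by (rule AE_pmfI) (rule average_attach_moment_prod[OF rrt_parent_less D])
  qed simp_all
  also have "\<dots> = factorial_moment D k n +
     (real (k 1) * factorial_moment D (lower_first k) n
      - real (\<Sum>e\<in>{1..D}. k e) * factorial_moment D k n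
      + (\<Sum>e\<in>{1..D}. shift_weight D k e * factorial_moment D (shift e k) n)) / real (Suc n)"
    unfolding factorial_moment_def
    by (simp add: integrable_rrt integral_add integral_diff integral_sum integral_mult_right_zero
        integral_divide_zero)
  finally show ?thesis .
qed


section \<open>An elementary limit lemma\<close>

lemma recursion_weighted_bound:
  fixes a e :: "nat \<Rightarrow> real" and K :: nat
  assumes K: "K \<ge> 1" and n: "n \<ge> K"
    and r: "a (Suc n) = (1 - real K / real (Suc n)) * a n + e n / real (Suc n)"
  shows "real (Suc n) * \<bar>a (Suc n)\<bar> \<le> real n * \<bar>a n\<bar> + \<bar>e n\<bar>"
proof -
  have "real (Suc n) * a (Suc n) = real (Suc n) * ((1 - real K / real (Suc n)) * a n + e n / real (Suc n))"
    by (simp only: r)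
  also have "\<dots> = (real (Suc n) - real K) * a n + e n"
    by (simp add: distrib_left right_diff_distrib mult.assoc[symmetric])
  finally have "real (Suc n) * a (Suc n) = (real (Suc n) - real K) * a n + e n" .
  then have "real (Suc n) * \<bar>a (Suc n)\<bar> = \<bar>(real (Suc n) - real K) * a n + e n\<bar>"
    by (metis abs_mult abs_of_nat)
  also have "\<dots> \<le> (real (Suc n) - real K) * \<bar>a n\<bar> + \<bar>e n\<bar>"
    using n abs_triangle_ineq[of "(real (Suc n) - real K) * a n" "e n"] by (simp add: abs_mult)
  also have "\<dots> \<le> real n * \<bar>a n\<bar> + \<bar>e n\<bar>"
    using K by (intro add_right_mono mult_right_mono) auto
  finally show ?thesis .
qed

text \<open>Summing the bound above,
  \<open>n |a n| \<le> C + (n - N) \<epsilon>/2\<close> beyond a threshold \<open>N\<close>, hence \<open>|a n| < \<epsilon>\<close> for large \<open>n\<close>.\<close>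
lemma perturbed_recursion_tendsto_zero:
  fixes a e :: "nat \<Rightarrow> real" and K :: nat
  assumes K: "K \<ge> 1" and e: "e \<longlonglongrightarrow> 0"
    and r: "\<And>n. a (Suc n) = (1 - real K / real (Suc n)) * a n + e n / real (Suc n)"
  shows "a \<longlonglongrightarrow> 0"
proof (rule LIMSEQ_I)
  fix eps :: real assume eps: "eps > 0"
  obtain N0 where N0: "\<And>n. n \<ge> N0 \<Longrightarrow> \<bar>e n\<bar> < eps / 2"
    using LIMSEQ_D[OF e, of "eps/2"] eps by auto
  define N where "N = max N0 K"
  define C where "C = real N * \<bar>a N\<bar>"
  have partial: "real m * \<bar>a m\<bar> \<le> C + real (m - N) * (eps / 2)" if "m \<ge> N" for m
    using that
  proof (induction m rule: dec_induct)
    case base then show ?case by (simp add: C_def)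
  next
    case (step m)
    have "real (Suc m) * \<bar>a (Suc m)\<bar> \<le> real m * \<bar>a m\<bar> + \<bar>e m\<bar>"
      using step.hyps by (intro recursion_weighted_bound[OF K _ r]) (auto simp: N_def)
    moreover have "\<bar>e m\<bar> < eps / 2" using N0[of m] step.hyps by (auto simp: N_def)
    moreover have "real (Suc m - N) * (eps / 2) = real (m - N) * (eps / 2) + eps / 2"
      using step.hyps by (simp add: Suc_diff_le distrib_right)
    ultimately show ?case using step.IH by linarith
  qed
  show "\<exists>no. \<forall>n\<ge>no. norm (a n - 0) < eps"
  proof (intro exI allI impI)
    fix m assume m: "m \<ge> max (Suc N) (nat \<lceil>2 * C / eps\<rceil> + 1)"
    then have "real m \<ge> real (nat \<lceil>2 * C / eps\<rceil> + 1)" by simp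
    moreover have "real (nat \<lceil>2 * C / eps\<rceil>) \<ge> 2 * C / eps" by linarith
    ultimately have "real m > 2 * C / eps" by simp
    then have Cm: "C < real m * (eps / 2)" using eps by (simp add: field_simps)
    have "real m * \<bar>a m\<bar> \<le> C + real (m - N) * (eps / 2)" using m by (intro partial) auto
    also have "\<dots> \<le> C + real m * (eps / 2)" using eps by (intro add_left_mono mult_right_mono) auto
    also have "\<dots> < real m * eps" using Cm by simp
    finally show "norm (a m - 0) < eps" using m by simp
  qed
qed


section \<open>Induction on the weight of the multi-index\<close>

text \<open>The weight \<open>\<Sum>i=1..D. i k_i\<close>; it decreases along both operations of the recursion.\<close>
definition weight :: "nat \<Rightarrow> (nat \<Rightarrow> nat) \<Rightarrow> nat" where
  "weight D k = (\<Sum>i\<in>{1..D}. i * k i)"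

lemma weight_lower_first_less: "D \<ge> 1 \<Longrightarrow> k 1 \<noteq> 0 \<Longrightarrow> weight D (lower_first k) < weight D k"
  unfolding weight_def lower_first_def by (rule sum_strict_mono_ex1) auto

lemma sum_remove_two:
  assumes "finite A" "e \<in> A" "Suc e \<in> A"
  shows "sum f A = f e + f (Suc e) + sum f (A - {e, Suc e})"
proof -
  have "sum f A = f e + sum f (A - {e})" using assms by (simp add: sum.remove)
  also have "sum f (A - {e}) = f (Suc e) + sum f (A - {e} - {Suc e})"
    using assms by (intro sum.remove) auto
  finally show ?thesis by (simp add: insert_commute set_diff_eq algebra_simps)
qed

lemma weight_shift_less:
  assumes e: "e \<ge> 1" "Suc e \<le> D" and k: "k (Suc e) \<noteq> 0"
  shows "weight D (shift e k) < weight D k"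
proof -
  have rest: "(\<Sum>i\<in>{1..D} - {e, Suc e}. i * shift e k i) = (\<Sum>i\<in>{1..D} - {e, Suc e}. i * k i)"
    by (rule sum.cong) (auto simp: shift_def)
  have "e * Suc (k e) + Suc e * (k (Suc e) - 1) < e * k e + Suc e * k (Suc e)"
    using k by (cases "k (Suc e)") auto
  then show ?thesis
    using e unfolding weight_def by (subst (1 2) sum_remove_two[of _ e]) (auto simp: rest shift_def)
qed

lemma scaled_deviation_tendsto_zero:
  fixes f :: "nat \<Rightarrow> real"
  assumes "c = 0 \<or> f \<longlonglongrightarrow> 1"
  shows "(\<lambda>n. c * (f n - 1)) \<longlonglongrightarrow> 0"
  using assms tendsto_mult_right_zero[of "\<lambda>n. f n - 1" sequentially c]
  by (auto simp: LIM_zero_iff)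

lemma sum_shift_weight:
  assumes D: "D \<ge> 1"
  shows "real (k 1) + (\<Sum>e\<in>{1..D}. shift_weight D k e) = real (\<Sum>e\<in>{1..D}. k e)"
proof -
  have "{1..D} = insert D {1..<D}" using D by auto
  then have "(\<Sum>e\<in>{1..D}. shift_weight D k e) = (\<Sum>e\<in>{1..<D}. real (k (Suc e)))"
    by (simp add: shift_weight_def)
  also have "\<dots> = (\<Sum>e\<in>{Suc 1..<Suc D}. real (k e))"
    by (rule sum.shift_bounds_Suc_ivl[symmetric])
  also have "\<dots> = (\<Sum>e\<in>{Suc 1..D}. real (k e))"
    by (simp add: atLeastLessThanSuc_atLeastAtMost)
  finally have "real (k 1) + (\<Sum>e\<in>{1..D}. shift_weight D k e) = real (k 1) + (\<Sum>e\<in>{Suc 1..D}. real (k e))"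
    by simp
  also have "\<dots> = (\<Sum>e\<in>{1..D}. real (k e))"
    using sum.atLeast_Suc_atMost[OF D, of "\<lambda>e. real (k e)"] by simp
  finally show ?thesis by simp
qed

definition moment_error :: "nat \<Rightarrow> (nat \<Rightarrow> nat) \<Rightarrow> nat \<Rightarrow> real" where
  "moment_error D k n = real (k 1) * (factorial_moment D (lower_first k) n - 1)
     + (\<Sum>e\<in>{1..D}. shift_weight D k e * (factorial_moment D (shift e k) n - 1))"

text \<open>The recursion for the deviation \<open>M_k(n) - 1\<close>, in the form required by
  \<open>perturbed_recursion_tendsto_zero\<close>.\<close>
lemma factorial_moment_deviation_step:
  assumes D: "D \<ge> 1"
  shows "factorial_moment D k (Suc n) - 1 =
    (1 - real (\<Sum>e\<in>{1..D}. k e) / real (Suc n)) * (factorial_moment D k n - 1)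
    + moment_error D k n / real (Suc n)"
proof -
  have "moment_error D k n = real (k 1) * factorial_moment D (lower_first k) n
      + (\<Sum>e\<in>{1..D}. shift_weight D k e * factorial_moment D (shift e k) n)
      - (real (k 1) + (\<Sum>e\<in>{1..D}. shift_weight D k e))"
    by (simp add: moment_error_def algebra_simps sum_subtractf)
  then have error_eq: "moment_error D k n = real (k 1) * factorial_moment D (lower_first k) n
      + (\<Sum>e\<in>{1..D}. shift_weight D k e * factorial_moment D (shift e k) n)
      - real (\<Sum>e\<in>{1..D}. k e)"
    by (simp only: sum_shift_weight[OF D])
  have affine: "X' - 1 = (1 - c / N) * (X - 1) + (A + B - c) / N"
    if "N \<noteq> 0" "X' = X + (A - c * X + B) / N" for X' X A B c N :: real
    using that(1) unfolding that(2) by (simp add: field_simps)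
  show ?thesis
    unfolding error_eq by (rule affine[OF _ factorial_moment_recursion[OF D]]) simp
qed

lemma factorial_moment_tendsto_one:
  assumes D: "D \<ge> 1"
  shows "factorial_moment D k \<longlonglongrightarrow> 1"
proof (induction "weight D k" arbitrary: k rule: less_induct)
  case less
  define K where "K = (\<Sum>e\<in>{1..D}. k e)"
  show ?case
  proof (cases "K = 0")
    case True
    then have "moment_prod D x k = 1" for x
      by (auto simp: K_def moment_prod_def ffall_def intro!: prod.neutral)
    then show ?thesis by (simp add: factorial_moment_def[abs_def])
  next
    case False
    have lower: "(\<lambda>n. real (k 1) * (factorial_moment D (lower_first k) n - 1)) \<longlonglongrightarrow> 0"
      using less[of "lower_first k"] weight_lower_first_less[OF D, of k]
      by (intro scaled_deviation_tendsto_zero) auto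
    have shifted: "(\<lambda>n. shift_weight D k e * (factorial_moment D (shift e k) n - 1)) \<longlonglongrightarrow> 0"
      if "e \<in> {1..D}" for e
      using that less[of "shift e k"] weight_shift_less[of e D k]
      by (intro scaled_deviation_tendsto_zero) (auto simp: shift_weight_def)
    have "moment_error D k \<longlonglongrightarrow> 0"
      unfolding moment_error_def[abs_def] by (intro tendsto_add_zero tendsto_null_sum lower shifted)
    then have "(\<lambda>n. factorial_moment D k n - 1) \<longlonglongrightarrow> 0"
      using perturbed_recursion_tendsto_zero[of K "moment_error D k" "\<lambda>n. factorial_moment D k n - 1",
          OF _ _ factorial_moment_deviation_step[OF D, of k, folded K_def]] False by simp
    then show ?thesis by (simp add: LIM_zero_iff)
  qed
qed


theorem mainTheorem5:
  fixes d :: nat and k :: "nat \<Rightarrow> nat"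
  assumes "d \<ge> 1"
  shows "(\<lambda>n. measure_pmf.expectation (rrt n)
            (\<lambda>par. \<Prod>i\<in>{1..d}. ffall (real (Xcnt par n i)) (k i))) \<longlonglongrightarrow> 1"
  using factorial_moment_tendsto_one[OF assms, of k]
  by (simp add: factorial_moment_def[abs_def] moment_prod_def counts_def)

end
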